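(* Let $(\mathcal{M}^n,g)$ be a mixed super quasi-Einstein manifold (notation as in the context) admitting an Einstein soliton, i.e. a Ricci-Bourguignon soliton $(g,\xi_1,\lambda,\rho)$ with $\rho=\frac12$. Then the soliton is expanding, steady, or shrinking according as $(n-2)\Psi_1-\Psi_2+\Psi_3<0$, $(n-2)\Psi_1-\Psi_2+\Psi_3=0$, or $(n-2)\Psi_1-\Psi_2+\Psi_3>0$, respectively.
   Context: $(\mathcal{M}^n,g)$, $n\ge3$, is a non-flat Riemannian manifold with Ricci tensor $\mathrm{Ric}$ and scalar curvature $r$. It is mixed super quasi-Einstein if $\mathrm{Ric}\not\equiv0$ and $\mathrm{Ric}(X,Y)=\Psi_1 g(X,Y)+\Psi_2\mathcal{A}(X)\mathcal{A}(Y)+\Psi_3\mathcal{B}(X)\mathcal{B}(Y)+\Psi_4(\mathcal{A}(X)\mathcal{B}(Y)+\mathcal{B}(X)\mathcal{A}(Y))+\Psi_5\mathcal{D}(X,Y)$, where $\Psi_i$ are smooth functions with $\Psi_2,\Psi_3,\Psi_4,\Psi_5\neq0$; $\xi_1,\xi_2$ are vector fields with $g(\xi_1,\xi_1)=g(\xi_2,\xi_2)=1$, $g(\xi_1,\xi_2)=0$; $\mathcal{A}=g(\cdot,\xi_1)$, $\mathcal{B}=g(\cdot,\xi_2)$; $\mathcal{D}$ is a symmetric trace-free $(0,2)$-tensor with $\mathcal{D}(X,\xi_1)=0$. A Ricci-Bourguignon soliton $(g,U,\lambda,\rho)$: a vector field $U$ and constants $\lambda,\rho$ with $\frac12\mathcal{L}_Ug+\mathrm{Ric}=(\lambda+\rho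 r)g$. Convention of the paper: the soliton is called expanding, steady, or shrinking according as $\lambda>0$, $\lambda=0$, or $\lambda<0$. *)

theory Defs
  imports "HOL-Analysis.Analysis"
begin

text \<open>Local-coordinate model of a Riemannian manifold: an open coordinate
domain S in R^n (n = CARD('n)), a metric given by its component matrix
g x $ i $ j, vector fields given by their components, (0,2)-tensor
fields by component matrices.\<close>

definition pd :: "'n::finite \<Rightarrow> (real^'n \<Rightarrow> real) \<Rightarrow> real^'n \<Rightarrow> real" where
  "pd k f x = deriv (\<lambda>t. f (x + t *\<^sub>R axis k 1)) 0"

fun pds :: "'n::finite list \<Rightarrow> (real^'n \<Rightarrow> real) \<Rightarrow> real^'n \<Rightarrow> real" where
  "pds [] f = f"
| "pds (k # ks) f = pd k (pds ks f)"

definition smooth_fun :: "(real^'n::finite) set \<Rightarrow> (real^'n \<Rightarrow> real) \<Rightarrow> bool" where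
  "smooth_fun S f \<longleftrightarrow> (\<forall>ks. \<forall>x\<in>S. pds ks f differentiable (at x))"

definition smooth_vf :: "(real^'n::finite) set \<Rightarrow> (real^'n \<Rightarrow> real^'n) \<Rightarrow> bool" where
  "smooth_vf S U \<longleftrightarrow> (\<forall>i. smooth_fun S (\<lambda>x. U x $ i))"

definition smooth_tensor :: "(real^'n::finite) set \<Rightarrow> (real^'n \<Rightarrow> real^'n^'n) \<Rightarrow> bool" where
  "smooth_tensor S T \<longleftrightarrow> (\<forall>i j. smooth_fun S (\<lambda>x. T x $ i $ j))"

definition riemannian_metric :: "(real^'n::finite) set \<Rightarrow> (real^'n \<Rightarrow> real^'n^'n) \<Rightarrow> bool" where
  "riemannian_metric S g \<longleftrightarrow> open S \<and> smooth_tensor S g \<and>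
     (\<forall>x\<in>S. transpose (g x) = g x \<and> (\<forall>v. v \<noteq> 0 \<longrightarrow> v \<bullet> (g x *v v) > 0))"

definition tens :: "real^'n^'n \<Rightarrow> real^'n \<Rightarrow> real^'n \<Rightarrow> real" where
  "tens T X Y = (\<Sum>i\<in>UNIV. \<Sum>j\<in>UNIV. T $ i $ j * X $ i * Y $ j)"

definition ginv :: "(real^'n \<Rightarrow> real^'n^'n) \<Rightarrow> real^'n \<Rightarrow> real^'n^'n::finite" where
  "ginv g x = matrix_inv (g x)"

definition christoffel :: "(real^'n \<Rightarrow> real^'n^'n) \<Rightarrow> 'n::finite \<Rightarrow> 'n \<Rightarrow> 'n \<Rightarrow> real^'n \<Rightarrow> real" where
  "christoffel g k i j x = (1/2) * (\<Sum>l\<in>UNIV. ginv g x $ k $ l *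
      (pd i (\<lambda>y. g y $ j $ l) x + pd j (\<lambda>y. g y $ i $ l) x - pd l (\<lambda>y. g y $ i $ j) x))"

definition riemann :: "(real^'n \<Rightarrow> real^'n^'n) \<Rightarrow> 'n::finite \<Rightarrow> 'n \<Rightarrow> 'n \<Rightarrow> 'n \<Rightarrow> real^'n \<Rightarrow> real" where
  "riemann g r s m v x =
     pd m (christoffel g r v s) x - pd v (christoffel g r m s) x
     + (\<Sum>l\<in>UNIV. christoffel g r m l x * christoffel g l v s x
                 - christoffel g r v l x * christoffel g l m s x)"

definition ricci :: "(real^'n \<Rightarrow> real^'n^'n) \<Rightarrow> real^'n \<Rightarrow> real^'n^'n::finite" where
  "ricci g x = (\<chi> s v. \<Sum>r\<in>UNIV. riemann g r s r v x)"

definition scalar_curv :: "(real^'n \<Rightarrow> real^'n^'n) \<Rightarrow> real^'n::finite \<Rightarrow> real" where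
  "scalar_curv g x = (\<Sum>i\<in>UNIV. \<Sum>j\<in>UNIV. ginv g x $ i $ j * ricci g x $ i $ j)"

definition flat :: "(real^'n::finite) set \<Rightarrow> (real^'n \<Rightarrow> real^'n^'n) \<Rightarrow> bool" where
  "flat S g \<longleftrightarrow> (\<forall>x\<in>S. \<forall>r s m v. riemann g r s m v x = 0)"

definition lie_g :: "(real^'n \<Rightarrow> real^'n) \<Rightarrow> (real^'n \<Rightarrow> real^'n^'n) \<Rightarrow> real^'n \<Rightarrow> real^'n^'n::finite" where
  "lie_g U g x = (\<chi> i j. \<Sum>k\<in>UNIV. U x $ k * pd k (\<lambda>y. g y $ i $ j) x
        + g x $ k $ j * pd i (\<lambda>y. U y $ k) x + g x $ i $ k * pd j (\<lambda>y. U y $ k) x)"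

definition dual1 :: "(real^'n \<Rightarrow> real^'n^'n) \<Rightarrow> (real^'n \<Rightarrow> real^'n) \<Rightarrow> real^'n \<Rightarrow> real^'n::finite" where
  "dual1 g xi x = g x *v xi x"

definition mixed_super_quasi_einstein ::
  "(real^'n::finite) set \<Rightarrow> (real^'n \<Rightarrow> real^'n^'n) \<Rightarrow> (real^'n \<Rightarrow> real) \<Rightarrow> (real^'n \<Rightarrow> real)
   \<Rightarrow> (real^'n \<Rightarrow> real) \<Rightarrow> (real^'n \<Rightarrow> real) \<Rightarrow> (real^'n \<Rightarrow> real)
   \<Rightarrow> (real^'n \<Rightarrow> real^'n) \<Rightarrow> (real^'n \<Rightarrow> real^'n) \<Rightarrow> (real^'n \<Rightarrow> real^'n^'n) \<Rightarrow> bool" where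
  "mixed_super_quasi_einstein S g \<Psi>1 \<Psi>2 \<Psi>3 \<Psi>4 \<Psi>5 \<xi>1 \<xi>2 D \<longleftrightarrow>
     riemannian_metric S g \<and>
     smooth_fun S \<Psi>1 \<and> smooth_fun S \<Psi>2 \<and> smooth_fun S \<Psi>3 \<and> smooth_fun S \<Psi>4 \<and> smooth_fun S \<Psi>5 \<and>
     (\<forall>x\<in>S. \<Psi>2 x \<noteq> 0 \<and> \<Psi>3 x \<noteq> 0 \<and> \<Psi>4 x \<noteq> 0 \<and> \<Psi>5 x \<noteq> 0) \<and>
     smooth_vf S \<xi>1 \<and> smooth_vf S \<xi>2 \<and> smooth_tensor S D \<and>
     (\<forall>x\<in>S. tens (g x) (\<xi>1 x) (\<xi>1 x) = 1 \<and> tens (g x) (\<xi>2 x) (\<xi>2 x) = 1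
             \<and> tens (g x) (\<xi>1 x) (\<xi>2 x) = 0) \<and>
     (\<forall>x\<in>S. transpose (D x) = D x
             \<and> (\<Sum>i\<in>UNIV. \<Sum>j\<in>UNIV. ginv g x $ i $ j * D x $ i $ j) = 0
             \<and> (\<forall>X. tens (D x) X (\<xi>1 x) = 0)) \<and>
     (\<exists>x\<in>S. ricci g x \<noteq> 0) \<and>
     (\<forall>x\<in>S. \<forall>X Y. tens (ricci g x) X Y =
         \<Psi>1 x * tens (g x) X Y
       + \<Psi>2 x * (X \<bullet> dual1 g \<xi>1 x) * (Y \<bullet> dual1 g \<xi>1 x)
       + \<Psi>3 x * (X \<bullet> dual1 g \<xi>2 x) * (Y \<bullet> dual1 g \<xi>2 x)
       + \<Psi>4 x * ((X \<bullet> dual1 g \<xi>1 x) * (Y \<bullet> dual1 g \<xi>2 x) + (X \<bullet> dual1 g \<xi>2 x) * (Y \<bullet> dual1 g \<xi>1 x))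
       + \<Psi>5 x * tens (D x) X Y)"

definition ricci_bourguignon_soliton ::
  "(real^'n::finite) set \<Rightarrow> (real^'n \<Rightarrow> real^'n^'n) \<Rightarrow> (real^'n \<Rightarrow> real^'n) \<Rightarrow> real \<Rightarrow> real \<Rightarrow> bool" where
  "ricci_bourguignon_soliton S g U lam \<rho> \<longleftrightarrow> smooth_vf S U \<and>
     (\<forall>x\<in>S. \<forall>X Y. (1/2) * tens (lie_g U g x) X Y + tens (ricci g x) X Y
                  = (lam + \<rho> * scalar_curv g x) * tens (g x) X Y)"

text \<open>Paper's convention.\<close>
definition expanding :: "real \<Rightarrow> bool" where "expanding lam \<longleftrightarrow> lam > 0"
definition steady :: "real \<Rightarrow> bool" where "steady lam \<longleftrightarrow> lam = 0"
definition shrinking :: "real \<Rightarrow> bool" where "shrinking lam \<longleftrightarrow> lam < 0"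

end

theory Submission
  imports Defs
begin

(* For a unit vector field \<xi> one has (L\<^sub>\<xi> g)(\<xi>,\<xi>) = \<xi>(g(\<xi>,\<xi>)) = 0, so the soliton
equation evaluated at (\<xi>\<^sub>1,\<xi>\<^sub>1) reads Ric(\<xi>\<^sub>1,\<xi>\<^sub>1) = \<lambda> + r/2. The quasi-Einstein form
gives Ric(\<xi>\<^sub>1,\<xi>\<^sub>1) = \<Psi>\<^sub>1 + \<Psi>\<^sub>2 (as D(\<xi>\<^sub>1,\<xi>\<^sub>1) = 0) and, contracting with g\<^sup>-\<^sup>1,
r = n \<Psi>\<^sub>1 + \<Psi>\<^sub>2 + \<Psi>\<^sub>3 (as D is trace-free and \<xi>\<^sub>1 \<bottom> \<xi>\<^sub>2). Hence
(n - 2) \<Psi>\<^sub>1 - \<Psi>\<^sub>2 + \<Psi>\<^sub>3 = -2\<lambda> at every point. *)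

lemma has_derivative_imp_pd:
  fixes f :: "real^'n::finite \<Rightarrow> real"
  assumes "(f has_derivative F) (at x)"
  shows "pd k f x = F (axis k 1)"
proof -
  have "((\<lambda>t. x + t *\<^sub>R axis k 1) has_derivative (\<lambda>t. t *\<^sub>R axis k 1)) (at 0)"
    by (intro derivative_eq_intros) auto
  then have "((\<lambda>t. f (x + t *\<^sub>R axis k 1)) has_derivative (\<lambda>t. F (t *\<^sub>R axis k 1))) (at 0)"
    using diff_chain_at[of "\<lambda>t. x + t *\<^sub>R axis k 1" _ 0 f F] assms by (simp add: o_def)
  moreover have "(\<lambda>t. F (t *\<^sub>R axis k 1)) = (*) (F (axis k 1))"
    using linear_scale[OF has_derivative_linear[OF assms]] by (auto simp: fun_eq_iff)
  ultimately have "((\<lambda>t. f (x + t *\<^sub>R axis k 1)) has_field_derivative F (axis k 1)) (at 0)"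
    by (simp add: has_field_derivative_def)
  then show ?thesis
    unfolding pd_def by (rule DERIV_imp_deriv)
qed

lemma has_derivative_eq_sum_pd:
  fixes f :: "real^'n::finite \<Rightarrow> real"
  assumes "(f has_derivative F) (at x)"
  shows "F v = (\<Sum>k\<in>UNIV. v $ k * pd k f x)"
proof -
  have "F v = F (\<Sum>k\<in>UNIV. v $ k *\<^sub>R axis k 1)"
    using basis_expansion[of v] by (simp add: scalar_mult_eq_scaleR)
  also have "\<dots> = (\<Sum>k\<in>UNIV. v $ k * F (axis k 1))"
    using has_derivative_linear[OF assms] by (simp add: linear_sum linear_scale)
  finally show ?thesis
    by (simp add: has_derivative_imp_pd[OF assms])
qed

lemma tens_axis: "tens T (axis i 1) (axis j 1) = T $ i $ j"
proof -
  have "T $ i' $ j' * axis i 1 $ i' * axis j 1 $ j'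
      = (if j' = j then if i' = i then T $ i $ j else 0 else 0)" for i' j'
    by (auto simp: axis_def)
  then show ?thesis
    by (simp add: tens_def)
qed

lemma tens_eq_inner: "tens T X Y = X \<bullet> (T *v Y)"
  by (simp add: tens_def inner_vec_def matrix_vector_mult_def sum_distrib_left mult_ac)

lemma tens_commute:
  assumes "transpose T = T"
  shows "tens T X Y = tens T Y X"
proof -
  have "T $ i $ j = T $ j $ i" for i j
    by (metis assms transpose_def vec_lambda_beta)
  then show ?thesis
    unfolding tens_def by (subst sum.swap) (simp add: mult_ac)
qed

lemma sum_sum_mult_eq_inner:
  "(\<Sum>i\<in>UNIV. \<Sum>j\<in>UNIV. M $ i $ j * A $ i * C $ j) = A \<bullet> (M *v (C :: real^'n::finite))"
  by (simp add: inner_vec_def matrix_vector_mult_def sum_distrib_left mult_ac)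

lemma has_derivative_tens_self:
  fixes g :: "real^'n::finite \<Rightarrow> real^'n^'n" and U :: "real^'n \<Rightarrow> real^'n"
  assumes "\<And>i j. ((\<lambda>y. g y $ i $ j) has_derivative G i j) (at x)"
    and "\<And>i. ((\<lambda>y. U y $ i) has_derivative V i) (at x)"
  shows "((\<lambda>y. tens (g y) (U y) (U y)) has_derivative
           (\<lambda>v. \<Sum>i\<in>UNIV. \<Sum>j\<in>UNIV. G i j v * U x $ i * U x $ j
               + g x $ i $ j * V i v * U x $ j + g x $ i $ j * U x $ i * V j v)) (at x)"
proof -
  have "((\<lambda>y. tens (g y) (U y) (U y)) has_derivative
           (\<lambda>v. \<Sum>i\<in>UNIV. \<Sum>j\<in>UNIV. g x $ i $ j * U x $ i * V j v
               + (g x $ i $ j * V i v + G i j v * U x $ i) * U x $ j)) (at x)"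
    unfolding tens_def by (intro has_derivative_sum has_derivative_mult assms)
  then show ?thesis
    by (rule has_derivative_eq_rhs) (intro ext sum.cong refl; simp add: algebra_simps)
qed

lemma tens_lie_g_self:
  fixes g :: "real^'n::finite \<Rightarrow> real^'n^'n" and U :: "real^'n \<Rightarrow> real^'n" and x :: "real^'n"
  defines "a \<equiv> U x"
  shows "tens (lie_g U g x) a a
    = (\<Sum>i\<in>UNIV. \<Sum>j\<in>UNIV. (\<Sum>k\<in>UNIV. a $ k * pd k (\<lambda>y. g y $ i $ j) x) * a $ i * a $ j
        + g x $ i $ j * (\<Sum>k\<in>UNIV. a $ k * pd k (\<lambda>y. U y $ i) x) * a $ j
        + g x $ i $ j * a $ i * (\<Sum>k\<in>UNIV. a $ k * pd k (\<lambda>y. U y $ j) x))"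
proof -
  define Q where "Q k i = pd k (\<lambda>y. U y $ i) x" for k i
  have first: "(\<Sum>i\<in>UNIV. \<Sum>j\<in>UNIV. \<Sum>k\<in>UNIV. g x $ k $ j * Q i k * a $ i * a $ j)
      = (\<Sum>i\<in>UNIV. \<Sum>j\<in>UNIV. g x $ i $ j * (\<Sum>k\<in>UNIV. a $ k * Q k i) * a $ j)"
    by (subst sum.swap, subst (2) sum.swap, subst sum.swap)
       (simp add: sum_distrib_left sum_distrib_right mult_ac)
  have second: "(\<Sum>i\<in>UNIV. \<Sum>j\<in>UNIV. \<Sum>k\<in>UNIV. g x $ i $ k * Q j k * a $ i * a $ j)
      = (\<Sum>i\<in>UNIV. \<Sum>j\<in>UNIV. g x $ i $ j * a $ i * (\<Sum>k\<in>UNIV. a $ k * Q k j))"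
    by (rule sum.cong[OF refl], subst sum.swap)
       (simp add: sum_distrib_left sum_distrib_right mult_ac)
  have "tens (lie_g U g x) a a
    = (\<Sum>i\<in>UNIV. \<Sum>j\<in>UNIV. (\<Sum>k\<in>UNIV. a $ k * pd k (\<lambda>y. g y $ i $ j) x) * a $ i * a $ j)
    + (\<Sum>i\<in>UNIV. \<Sum>j\<in>UNIV. \<Sum>k\<in>UNIV. g x $ k $ j * Q i k * a $ i * a $ j)
    + (\<Sum>i\<in>UNIV. \<Sum>j\<in>UNIV. \<Sum>k\<in>UNIV. g x $ i $ k * Q j k * a $ i * a $ j)"
    unfolding tens_def lie_g_def Q_def a_def
    by (simp add: sum.distrib sum_distrib_right distrib_right)
  then show ?thesis
    unfolding first second unfolding Q_def by (simp only: sum.distrib)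
qed

(* The coordinate form of (L\<^sub>U g)(U,U) = U(g(U,U)). *)

lemma lie_g_self_eq_derivative:
  fixes g :: "real^'n::finite \<Rightarrow> real^'n^'n" and U :: "real^'n \<Rightarrow> real^'n"
  assumes "\<And>i j. (\<lambda>y. g y $ i $ j) differentiable (at x)"
    and "\<And>i. (\<lambda>y. U y $ i) differentiable (at x)"
    and "((\<lambda>y. tens (g y) (U y) (U y)) has_derivative H) (at x)"
  shows "tens (lie_g U g x) (U x) (U x) = H (U x)"
proof -
  define G where "G i j = frechet_derivative (\<lambda>y. g y $ i $ j) (at x)" for i j
  define V where "V i = frechet_derivative (\<lambda>y. U y $ i) (at x)" for i
  have G: "((\<lambda>y. g y $ i $ j) has_derivative G i j) (at x)" for i j
    unfolding G_def using assms(1) frechet_derivative_works by blast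
  have V: "((\<lambda>y. U y $ i) has_derivative V i) (at x)" for i
    unfolding V_def using assms(2) frechet_derivative_works by blast
  have "H = (\<lambda>v. \<Sum>i\<in>UNIV. \<Sum>j\<in>UNIV. G i j v * U x $ i * U x $ j
               + g x $ i $ j * V i v * U x $ j + g x $ i $ j * U x $ i * V j v)"
    using has_derivative_unique[OF assms(3) has_derivative_tens_self[OF G V]] .
  then have "H (U x) = (\<Sum>i\<in>UNIV. \<Sum>j\<in>UNIV. G i j (U x) * U x $ i * U x $ j
      + g x $ i $ j * V i (U x) * U x $ j + g x $ i $ j * U x $ i * V j (U x))"
    by simp
  then show ?thesis
    unfolding tens_lie_g_self
    by (simp only: has_derivative_eq_sum_pd[OF G] has_derivative_eq_sum_pd[OF V])
qed

lemma lie_g_self_eq_0_if_constant_length: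
  fixes g :: "real^'n::finite \<Rightarrow> real^'n^'n" and U :: "real^'n \<Rightarrow> real^'n"
  assumes "open S" "x \<in> S"
    and "\<And>i j. (\<lambda>y. g y $ i $ j) differentiable (at x)"
    and "\<And>i. (\<lambda>y. U y $ i) differentiable (at x)"
    and "\<And>y. y \<in> S \<Longrightarrow> tens (g y) (U y) (U y) = c"
  shows "tens (lie_g U g x) (U x) (U x) = 0"
proof -
  have "((\<lambda>y. tens (g y) (U y) (U y)) has_derivative (\<lambda>_. 0)) (at x)"
    by (rule has_derivative_transform_within_open[OF has_derivative_const assms(1,2)])
       (use assms(5) in simp)
  then show ?thesis
    using lie_g_self_eq_derivative[OF assms(3,4)] by blast
qed

lemma smooth_fun_differentiable:
  assumes "smooth_fun S f" "x \<in> S"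
  shows "f differentiable (at x)"
  using assms pds.simps(1) unfolding smooth_fun_def by metis

lemma ginv_mult_self:
  assumes "\<And>v. v \<noteq> 0 \<Longrightarrow> v \<bullet> (g x *v v) > 0"
  shows "ginv g x ** g x = mat 1"
proof -
  have "\<forall>v. g x *v v = 0 \<longrightarrow> v = 0"
    using assms by (metis inner_zero_right less_irrefl)
  then have "invertible (g x)"
    using matrix_left_invertible_ker invertible_left_inverse by blast
  then show ?thesis
    unfolding ginv_def invertible_def matrix_inv_def by (rule someI2_ex) blast
qed

lemma inverse_contract_self:
  fixes M G :: "real^'n::finite^'n"
  assumes "M ** G = mat 1" "transpose G = G"
  shows "(\<Sum>i\<in>UNIV. \<Sum>j\<in>UNIV. M $ i $ j * G $ i $ j) = real CARD('n)"
proof -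
  have "G $ i $ j = G $ j $ i" for i j
    by (metis assms(2) transpose_def vec_lambda_beta)
  then have "(\<Sum>j\<in>UNIV. M $ i $ j * G $ i $ j) = (M ** G) $ i $ i" for i
    by (simp add: matrix_matrix_mult_def)
  then show ?thesis
    using assms(1) by (simp add: mat_def)
qed

lemma inverse_contract_duals:
  fixes M G :: "real^'n::finite^'n"
  assumes "M ** G = mat 1" "transpose G = G"
  shows "(\<Sum>i\<in>UNIV. \<Sum>j\<in>UNIV. M $ i $ j * (G *v a) $ i * (G *v b) $ j) = tens G a b"
proof -
  have "(\<Sum>i\<in>UNIV. \<Sum>j\<in>UNIV. M $ i $ j * (G *v a) $ i * (G *v b) $ j) = (G *v a) \<bullet> b"
    unfolding sum_sum_mult_eq_inner by (simp add: matrix_vector_mul_assoc assms(1))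
  also have "\<dots> = tens G b a"
    by (simp add: tens_eq_inner inner_commute)
  finally show ?thesis
    using tens_commute[OF assms(2)] by simp
qed

lemma ricci_self_of_soliton_unit_field:
  assumes "ricci_bourguignon_soliton S g U lam \<rho>" "riemannian_metric S g" "x \<in> S"
    and "\<And>y. y \<in> S \<Longrightarrow> tens (g y) (U y) (U y) = 1"
  shows "tens (ricci g x) (U x) (U x) = lam + \<rho> * scalar_curv g x"
proof -
  have "tens (lie_g U g x) (U x) (U x) = 0"
  proof (rule lie_g_self_eq_0_if_constant_length)
    show "open S"
      using assms(2) unfolding riemannian_metric_def by blast
    show "(\<lambda>y. g y $ i $ j) differentiable (at x)" for i j
      using assms(2,3) smooth_fun_differentiable
      unfolding riemannian_metric_def smooth_tensor_def by blast
    show "(\<lambda>y. U y $ i) differentiable (at x)" for i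
      using assms(1,3) smooth_fun_differentiable
      unfolding ricci_bourguignon_soliton_def smooth_vf_def by blast
  qed (use assms(3,4) in auto)
  moreover have "1/2 * tens (lie_g U g x) (U x) (U x) + tens (ricci g x) (U x) (U x)
      = (lam + \<rho> * scalar_curv g x) * tens (g x) (U x) (U x)"
    using assms(1,3) unfolding ricci_bourguignon_soliton_def by blast
  ultimately show ?thesis
    using assms(3,4) by simp
qed

lemma ricci_xi1_msqe:
  assumes "mixed_super_quasi_einstein S g \<Psi>1 \<Psi>2 \<Psi>3 \<Psi>4 \<Psi>5 \<xi>1 \<xi>2 D" "x \<in> S"
  shows "tens (ricci g x) (\<xi>1 x) (\<xi>1 x) = \<Psi>1 x + \<Psi>2 x"
proof -
  have "\<xi>1 x \<bullet> dual1 g \<xi>1 x = 1" "\<xi>1 x \<bullet> dual1 g \<xi>2 x = 0"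
    using assms unfolding mixed_super_quasi_einstein_def dual1_def tens_eq_inner by auto
  then show ?thesis
    using assms unfolding mixed_super_quasi_einstein_def by auto
qed

lemma scalar_curv_msqe:
  fixes S :: "(real^'n::finite) set"
  assumes "mixed_super_quasi_einstein S g \<Psi>1 \<Psi>2 \<Psi>3 \<Psi>4 \<Psi>5 \<xi>1 \<xi>2 D" "x \<in> S"
  shows "scalar_curv g x = real CARD('n) * \<Psi>1 x + \<Psi>2 x + \<Psi>3 x"
proof -
  define G M A B where "G = g x" and "M = ginv g x"
    and "A = dual1 g \<xi>1 x" and "B = dual1 g \<xi>2 x"
  have metric: "riemannian_metric S g"
    and unit: "tens G (\<xi>1 x) (\<xi>1 x) = 1" "tens G (\<xi>2 x) (\<xi>2 x) = 1"
              "tens G (\<xi>1 x) (\<xi>2 x) = 0"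
    and D_tracefree: "(\<Sum>i\<in>UNIV. \<Sum>j\<in>UNIV. M $ i $ j * D x $ i $ j) = 0"
    and ricci: "\<And>X Y. tens (ricci g x) X Y = \<Psi>1 x * tens G X Y
       + \<Psi>2 x * (X \<bullet> A) * (Y \<bullet> A) + \<Psi>3 x * (X \<bullet> B) * (Y \<bullet> B)
       + \<Psi>4 x * ((X \<bullet> A) * (Y \<bullet> B) + (X \<bullet> B) * (Y \<bullet> A)) + \<Psi>5 x * tens (D x) X Y"
    using assms unfolding mixed_super_quasi_einstein_def G_def M_def A_def B_def by auto
  have sym: "transpose G = G" and MG: "M ** G = mat 1"
    using metric assms(2) ginv_mult_self[of g x]
    unfolding riemannian_metric_def G_def M_def by auto
  have "ricci g x $ i $ j = \<Psi>1 x * G $ i $ j + \<Psi>2 x * A $ i * A $ j + \<Psi>3 x * B $ i * B $ j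
      + \<Psi>4 x * (A $ i * B $ j + B $ i * A $ j) + \<Psi>5 x * D x $ i $ j" for i j
    using ricci[of "axis i 1" "axis j 1"]
    by (simp add: tens_axis inner_axis')
  then have "scalar_curv g x = \<Psi>1 x * (\<Sum>i\<in>UNIV. \<Sum>j\<in>UNIV. M $ i $ j * G $ i $ j)
      + \<Psi>2 x * (\<Sum>i\<in>UNIV. \<Sum>j\<in>UNIV. M $ i $ j * A $ i * A $ j)
      + \<Psi>3 x * (\<Sum>i\<in>UNIV. \<Sum>j\<in>UNIV. M $ i $ j * B $ i * B $ j)
      + \<Psi>4 x * (\<Sum>i\<in>UNIV. \<Sum>j\<in>UNIV. M $ i $ j * A $ i * B $ j)
      + \<Psi>4 x * (\<Sum>i\<in>UNIV. \<Sum>j\<in>UNIV. M $ i $ j * B $ i * A $ j)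
      + \<Psi>5 x * (\<Sum>i\<in>UNIV. \<Sum>j\<in>UNIV. M $ i $ j * D x $ i $ j)"
    unfolding scalar_curv_def M_def[symmetric]
    by (simp add: sum.distrib sum_distrib_left algebra_simps)
  moreover have "A = G *v \<xi>1 x" "B = G *v \<xi>2 x"
    unfolding A_def B_def G_def dual1_def by simp_all
  ultimately show ?thesis
    using unit tens_commute[OF sym, of "\<xi>1 x" "\<xi>2 x"] D_tracefree
    by (simp add: inverse_contract_self[OF MG sym] inverse_contract_duals[OF MG sym])
qed

lemma einstein_soliton_msqe_lambda:
  fixes S :: "(real^'n::finite) set"
  assumes "mixed_super_quasi_einstein S g \<Psi>1 \<Psi>2 \<Psi>3 \<Psi>4 \<Psi>5 \<xi>1 \<xi>2 D"
    and "ricci_bourguignon_soliton S g \<xi>1 lam (1/2)" "x \<in> S"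
  shows "(real CARD('n) - 2) * \<Psi>1 x - \<Psi>2 x + \<Psi>3 x = - 2 * lam"
proof -
  have "tens (ricci g x) (\<xi>1 x) (\<xi>1 x) = lam + 1/2 * scalar_curv g x"
    using assms unfolding mixed_super_quasi_einstein_def
    by (intro ricci_self_of_soliton_unit_field) auto
  then show ?thesis
    using ricci_xi1_msqe[OF assms(1,3)] scalar_curv_msqe[OF assms(1,3)]
    by (simp add: algebra_simps)
qed

theorem mainTheorem8:
  fixes S :: "(real^'n::finite) set"
    and g :: "real^'n \<Rightarrow> real^'n^'n"
    and \<Psi>1 \<Psi>2 \<Psi>3 \<Psi>4 \<Psi>5 :: "real^'n \<Rightarrow> real"
    and \<xi>1 \<xi>2 :: "real^'n \<Rightarrow> real^'n"
    and D :: "real^'n \<Rightarrow> real^'n^'n"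
    and lam :: real
  assumes dim: "CARD('n) \<ge> 3"
    and nonflat: "\<not> flat S g"
    and msqe: "mixed_super_quasi_einstein S g \<Psi>1 \<Psi>2 \<Psi>3 \<Psi>4 \<Psi>5 \<xi>1 \<xi>2 D"
    and sol: "ricci_bourguignon_soliton S g \<xi>1 lam (1/2)"
  shows "\<forall>x\<in>S.
     (expanding lam \<longleftrightarrow> (real CARD('n) - 2) * \<Psi>1 x - \<Psi>2 x + \<Psi>3 x < 0) \<and>
     (steady lam \<longleftrightarrow> (real CARD('n) - 2) * \<Psi>1 x - \<Psi>2 x + \<Psi>3 x = 0) \<and>
     (shrinking lam \<longleftrightarrow> (real CARD('n) - 2) * \<Psi>1 x - \<Psi>2 x + \<Psi>3 x > 0)"
  using einstein_soliton_msqe_lambda[OF msqe sol]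
  unfolding expanding_def steady_def shrinking_def by auto

end
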